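(* Let $\mathbb{D}^2=\{z\in\mathbb{C}:|z|\leq 1\}$ be the closed unit disc, with boundary circle $S^1=\{z:|z|=1\}$. Let $f:\mathbb{D}^2\rightarrow\mathbb{D}^2$ be continuous such that $|f(z)-z|<\frac{\sqrt{3}}{2}$ for all $z\in S^1$. Then there exists a continuous map $g:\mathbb{D}^2\rightarrow\mathbb{D}^2$ such that $\|g\circ f-\mathrm{id}_{\mathbb{D}^2}\|_{\infty}=\sup_{z\in\mathbb{D}^2}|g(f(z))-z|<1$. *)

theory Defs
  imports "HOL-Analysis.Analysis"
begin

end

theory Submission
  imports Defs
begin

text \<open>
  On the boundary circle the hypothesis forces \<open>\<langle>f z, z\<rangle> > 1/8\<close>, and by compactness
  \<open>\<langle>f z, z\<rangle> > 1/8\<close> persists on an annulus \<open>\<rho> < |z| \<le> 1\<close> with \<open>\<rho> < 1\<close>. The map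
  \<open>g w = e w\<close> for a small \<open>e > 0\<close> works: on the annulus the short vector \<open>e f z\<close> points into
  the half-plane facing \<open>z\<close>, so \<open>|e f z - z|\<^sup>2 \<le> 1 - e/8\<close>; inside the annulus \<open>|e f z - z| \<le> e + \<rho>\<close>.
\<close>

lemma inner_gt_of_norm_diff_lt:
  fixes w z :: "'a::real_inner"
  assumes "norm z = 1" and "norm (w - z) < d"
  shows "(1 - d\<^sup>2) / 2 < inner w z"
proof -
  have "(norm (w - z))\<^sup>2 < d\<^sup>2"
    using assms(2) by (intro power_strict_mono) auto
  moreover have "2 * inner w z = (norm w)\<^sup>2 + 1 - (norm (w - z))\<^sup>2"
    using dot_norm_neg[of w z] assms(1) by simp
  ultimately have "1 < d\<^sup>2 + 2 * inner w z"
    using zero_le_power2[of "norm w"] by linarith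
  then show ?thesis
    by (simp add: field_simps)
qed

lemma continuous_on_gt_near_sphere:
  fixes F :: "'a::heine_borel \<Rightarrow> real"
  assumes F: "continuous_on (cball a r) F"
    and sphere: "\<And>z. z \<in> sphere a r \<Longrightarrow> c < F z"
  obtains \<rho> where "\<rho> < r" "\<And>z. z \<in> cball a r \<Longrightarrow> \<rho> < dist a z \<Longrightarrow> c < F z"
proof -
  define K where "K = cball a r \<inter> F -` {..c}"
  have "closed K"
    unfolding K_def by (rule continuous_closed_preimage[OF F]) auto
  then have "compact (cball a r \<inter> K)"
    by (rule compact_Int_closed[OF compact_cball])
  then have "compact K"
    by (simp add: K_def)
  show thesis
  proof (cases "K = {}")
    case True
    then show thesis
      by (intro that[of "r - 1"]) (auto simp: K_def not_le)
  next
    case False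
    obtain z0 where z0: "z0 \<in> K" "\<And>z. z \<in> K \<Longrightarrow> dist a z \<le> dist a z0"
      using continuous_attains_sup[OF \<open>compact K\<close> False continuous_on_dist[of K "\<lambda>_. a" "\<lambda>z. z"]]
      by auto
    have "z0 \<notin> sphere a r"
      using z0(1) sphere by (force simp: K_def)
    with z0(1) have "dist a z0 < r"
      by (auto simp: K_def)
    moreover have "c < F z" if "z \<in> cball a r" "dist a z0 < dist a z" for z
      using that z0(2)[of z] by (force simp: K_def)
    ultimately show thesis
      by (rule that)
  qed
qed

lemma norm_scaleR_diff_squared_le:
  fixes w z :: "'a::real_inner"
  assumes "norm w \<le> 1" "norm z \<le> 1" "0 \<le> e" "e \<le> c" "c \<le> inner w z"
  shows "(norm (e *\<^sub>R w - z))\<^sup>2 \<le> 1 - e * c"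
proof -
  have "(norm (e *\<^sub>R w - z))\<^sup>2 = e\<^sup>2 * (norm w)\<^sup>2 + (norm z)\<^sup>2 - 2 * e * inner w z"
    using dot_norm_neg[of "e *\<^sub>R w" z] assms(3) by (simp add: power_mult_distrib)
  also have "\<dots> \<le> e\<^sup>2 + 1 - 2 * e * c"
  proof -
    have "e\<^sup>2 * (norm w)\<^sup>2 \<le> e\<^sup>2"
      using assms(1) by (simp add: mult_left_le power_le_one)
    moreover have "(norm z)\<^sup>2 \<le> 1"
      using assms(2) by (simp add: power_le_one)
    moreover have "e * c \<le> e * inner w z"
      using assms(3,5) by (simp add: mult_left_mono)
    ultimately show ?thesis by linarith
  qed
  also have "\<dots> \<le> 1 - e * c"
    using mult_left_mono[OF assms(4,3)] by (simp add: power2_eq_square mult.commute)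
  finally show ?thesis .
qed

lemma scaleR_displacement_uniformly_lt_one:
  fixes f :: "'a::real_inner \<Rightarrow> 'a"
  assumes maps: "f ` cball 0 1 \<subseteq> cball 0 1" and "\<rho> < 1" "0 < c"
    and annulus: "\<And>z. z \<in> cball 0 1 \<Longrightarrow> \<rho> < norm z \<Longrightarrow> c \<le> inner (f z) z"
  obtains e B where "0 < e" "e \<le> 1" "B < 1" "\<And>z. z \<in> cball 0 1 \<Longrightarrow> norm (e *\<^sub>R f z - z) \<le> B"
proof
  define e where "e = min (min 1 c) ((1 - \<rho>) / 2)"
  have e: "0 < e" "e \<le> 1" "e \<le> c" "e + \<rho> \<le> (1 + \<rho>) / 2"
    using \<open>\<rho> < 1\<close> \<open>0 < c\<close> by (auto simp: e_def min_def field_simps)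
  define B where "B = max (sqrt (1 - e * c)) ((1 + \<rho>) / 2)"
  show "0 < e" "e \<le> 1"
    using e by auto
  show "B < 1"
    using e \<open>\<rho> < 1\<close> \<open>0 < c\<close> by (simp add: B_def)
  fix z :: 'a
  assume z: "z \<in> cball 0 1"
  have "norm (f z) \<le> 1" "norm z \<le> 1"
    using maps z by (auto simp: image_subset_iff)
  show "norm (e *\<^sub>R f z - z) \<le> B"
  proof (cases "\<rho> < norm z")
    case True
    have "(norm (e *\<^sub>R f z - z))\<^sup>2 \<le> 1 - e * c"
      using norm_scaleR_diff_squared_le[of "f z" z e c] annulus[OF z True]
        \<open>norm (f z) \<le> 1\<close> \<open>norm z \<le> 1\<close> e by simp
    then show ?thesis
      unfolding B_def by (metis max.coboundedI1 real_le_rsqrt)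
  next
    case False
    have "norm (e *\<^sub>R f z - z) \<le> e * norm (f z) + norm z"
      using norm_triangle_ineq4[of "e *\<^sub>R f z" z] e(1) by simp
    also have "\<dots> \<le> e + \<rho>"
      using False mult_left_le[OF \<open>norm (f z) \<le> 1\<close>, of e] e(1) by linarith
    finally show ?thesis
      unfolding B_def using e(4) by linarith
  qed
qed

theorem lemma1:
  fixes f :: "complex \<Rightarrow> complex"
  assumes "continuous_on (cball 0 1) f"
    and "f ` cball 0 1 \<subseteq> cball 0 1"
    and "\<And>z. z \<in> sphere 0 1 \<Longrightarrow> cmod (f z - z) < sqrt 3 / 2"
  shows "\<exists>g :: complex \<Rightarrow> complex. continuous_on (cball 0 1) g \<and> g ` cball 0 1 \<subseteq> cball 0 1 \<and>
           (SUP z\<in>cball 0 1. cmod (g (f z) - z)) < 1"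
proof -
  have "continuous_on (cball 0 1) (\<lambda>z. inner (f z) z)"
    by (intro continuous_intros assms(1))
  moreover have "1/8 < inner (f z) z" if "z \<in> sphere 0 1" for z
    using inner_gt_of_norm_diff_lt[OF _ assms(3)[OF that]] that by (simp add: power_divide)
  ultimately obtain \<rho> where "\<rho> < 1"
    and near_sphere: "\<And>z. z \<in> cball 0 1 \<Longrightarrow> \<rho> < dist 0 z \<Longrightarrow> 1/8 < inner (f z) z"
    using continuous_on_gt_near_sphere by blast
  have annulus: "\<And>z. z \<in> cball 0 1 \<Longrightarrow> \<rho> < cmod z \<Longrightarrow> 1/8 \<le> inner (f z) z"
    using near_sphere by (simp add: less_imp_le)
  obtain e B where e: "0 < e" "e \<le> 1" and "B < 1"
    and bound: "\<And>z. z \<in> cball 0 1 \<Longrightarrow> cmod (e *\<^sub>R f z - z) \<le> B"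
    by (rule scaleR_displacement_uniformly_lt_one[OF assms(2) \<open>\<rho> < 1\<close> _ annulus]) simp_all
  have "(SUP z\<in>cball 0 1. cmod (e *\<^sub>R f z - z)) \<le> B"
    using bound by (intro cSUP_least) auto
  moreover have "(\<lambda>w::complex. e *\<^sub>R w) ` cball 0 1 \<subseteq> cball 0 1"
    using e by (auto simp: mult_le_one)
  ultimately show ?thesis
    using \<open>B < 1\<close> by (intro exI[of _ "\<lambda>w. e *\<^sub>R w"]) (auto intro: continuous_intros)
qed

end
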